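(* Let $K$ be a field, and let $\Phi,\Psi\colon \bigoplus_{1\le b\le d\le 3}\mathbb{I}[b,d]^{m_{b,d}}\to \bigoplus_{1\le b\le d\le 3}\mathbb{I}[b,d]^{m'_{b,d}}$ be morphisms of representations of the quiver $A_3(bf)\colon 1\leftarrow 2\rightarrow 3$ such that $\Phi=R\,\Psi\,C$ for some automorphisms $C$ of the source and $R$ of the target. Then $\Phi^{1:3}_{1:3}=R^{1:3}_{1:3}\,\Psi^{1:3}_{1:3}\,C^{1:3}_{1:3}$ with $R^{1:3}_{1:3}$ and $C^{1:3}_{1:3}$ isomorphisms; in particular $\Phi^{1:3}_{1:3}$ and $\Psi^{1:3}_{1:3}$ are isomorphic as objects of the arrow category of representations. Consequently, for a morphism $\varphi\colon V\to W$ of finite-dimensional representations of $A_3(bf)$, the isomorphism class of the block $(\eta_W\varphi\eta_V^{-1})^{1:3}_{1:3}$ does not depend on the choice of isomorphisms $\eta_V,\eta_W$ of $V,W$ onto direct sums of interval representations.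
   Context: $\mathbb{I}[b,d]$ denotes the interval representation with $K$ at vertices $b,\dots,d$, $0$ elsewhere, identity maps between consecutive copies of $K$ and zero maps otherwise; $\mathbb{I}[b,d]^m$ is the direct sum of $m$ copies. For a morphism $\Phi\colon\bigoplus\mathbb{I}[b,d]^{m_{b,d}}\to\bigoplus\mathbb{I}[b,d]^{m'_{b,d}}$, its block $\Phi^{c:d}_{a:b}$ is $\pi_{c,d}\circ\Phi\circ\iota_{a,b}$ with $\iota_{a,b}$ the canonical summand inclusion into the source and $\pi_{c,d}$ the canonical summand projection of the target. The arrow category of representations has morphisms as objects; a morphism from $f\colon M\to N$ to $f'\colon M'\to N'$ is a pair $(F_M,F_N)$ of morphisms with $F_Nf=f'F_M$; two objects are isomorphic if such a pair of isomorphisms exists. *)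

theory Defs
  imports Main
begin

text \<open>Finite-dimensional representations of the quiver A3(bf): 1 <- 2 -> 3 over a field,
  in coordinates: the space at vertex i (i = 1,2,3) is K^(sp V i) for a finite index set,
  the two structure maps are matrices  al : V_2 -> V_1  and  be : V_2 -> V_3.
  Matrices are functions row => column => K, required to vanish outside their support.\<close>

record ('a, 'k) rep =
  sp :: "nat \<Rightarrow> 'a set"
  al :: "'a \<Rightarrow> 'a \<Rightarrow> 'k"
  be :: "'a \<Rightarrow> 'a \<Rightarrow> 'k"

type_synonym ('b, 'a, 'k) mor = "nat \<Rightarrow> 'b \<Rightarrow> 'a \<Rightarrow> 'k"

definition mmul :: "'b set \<Rightarrow> ('c \<Rightarrow> 'b \<Rightarrow> 'k::comm_semiring_1) \<Rightarrow> ('b \<Rightarrow> 'a \<Rightarrow> 'k) \<Rightarrow> 'c \<Rightarrow> 'a \<Rightarrow> 'k" where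
  "mmul S A B = (\<lambda>r c. \<Sum>x\<in>S. A r x * B x c)"

definition wf_rep :: "('a, 'k::comm_semiring_1) rep \<Rightarrow> bool" where
  "wf_rep V \<longleftrightarrow> (\<forall>i. finite (sp V i)) \<and> (\<forall>i. i \<notin> {1,2,3} \<longrightarrow> sp V i = {})
     \<and> (\<forall>r c. (r \<notin> sp V 1 \<or> c \<notin> sp V 2) \<longrightarrow> al V r c = 0)
     \<and> (\<forall>r c. (r \<notin> sp V 3 \<or> c \<notin> sp V 2) \<longrightarrow> be V r c = 0)"

text \<open>Morphism F : V -> W (F i is the linear map at vertex i, as a matrix W_i x V_i).\<close>
definition is_mor :: "('a, 'k::comm_semiring_1) rep \<Rightarrow> ('b, 'k) rep \<Rightarrow> ('b, 'a, 'k) mor \<Rightarrow> bool" where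
  "is_mor V W F \<longleftrightarrow>
     (\<forall>i r c. (i \<notin> {1,2,3} \<or> r \<notin> sp W i \<or> c \<notin> sp V i) \<longrightarrow> F i r c = 0)
     \<and> mmul (sp V 1) (F 1) (al V) = mmul (sp W 2) (al W) (F 2)
     \<and> mmul (sp V 3) (F 3) (be V) = mmul (sp W 2) (be W) (F 2)"

text \<open>Composition F o G, where G : U -> V and F : V -> W (V is the middle object).\<close>
definition comp :: "('b, 'k::comm_semiring_1) rep \<Rightarrow> ('c, 'b, 'k) mor \<Rightarrow> ('b, 'a, 'k) mor \<Rightarrow> ('c, 'a, 'k) mor" where
  "comp V F G = (\<lambda>i. mmul (sp V i) (F i) (G i))"

definition idm :: "('a, 'k::comm_semiring_1) rep \<Rightarrow> ('a, 'a, 'k) mor" where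
  "idm V = (\<lambda>i r c. if r \<in> sp V i \<and> r = c then 1 else 0)"

definition inv_pair :: "('a, 'k::comm_semiring_1) rep \<Rightarrow> ('b, 'k) rep \<Rightarrow> ('b, 'a, 'k) mor \<Rightarrow> ('a, 'b, 'k) mor \<Rightarrow> bool" where
  "inv_pair V W F G \<longleftrightarrow> is_mor V W F \<and> is_mor W V G \<and> comp W G F = idm V \<and> comp V F G = idm W"

definition is_iso :: "('a, 'k::comm_semiring_1) rep \<Rightarrow> ('b, 'k) rep \<Rightarrow> ('b, 'a, 'k) mor \<Rightarrow> bool" where
  "is_iso V W F \<longleftrightarrow> (\<exists>G. inv_pair V W F G)"

text \<open>Direct sum  \<Oplus>_{1\<le>b\<le>d\<le>3} I[b,d]^{m b d}; basis vectors are triples (b,d,j), j < m b d,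
  and (b,d,j) lives at vertex i iff b \<le> i \<le> d.\<close>
type_synonym idx = "nat \<times> nat \<times> nat"

definition dsp :: "(nat \<Rightarrow> nat \<Rightarrow> nat) \<Rightarrow> nat \<Rightarrow> idx set" where
  "dsp m i = (if i \<in> {1,2,3} then {(b,d,j). 1 \<le> b \<and> b \<le> i \<and> i \<le> d \<and> d \<le> 3 \<and> j < m b d} else {})"

definition DS :: "(nat \<Rightarrow> nat \<Rightarrow> nat) \<Rightarrow> (idx, 'k::comm_semiring_1) rep" where
  "DS m = \<lparr> sp = dsp m,
            al = (\<lambda>r c. if r \<in> dsp m 1 \<and> c \<in> dsp m 2 \<and> r = c then 1 else 0),
            be = (\<lambda>r c. if r \<in> dsp m 3 \<and> c \<in> dsp m 2 \<and> r = c then 1 else 0) \<rparr>"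

text \<open>I[a,b]^k as the direct sum with only the summand (a,b) present.\<close>
definition Iint :: "nat \<Rightarrow> nat \<Rightarrow> nat \<Rightarrow> (idx, 'k::comm_semiring_1) rep" where
  "Iint k a b = DS (\<lambda>x y. if x = a \<and> y = b then k else 0)"

definition incl :: "(nat \<Rightarrow> nat \<Rightarrow> nat) \<Rightarrow> nat \<Rightarrow> nat \<Rightarrow> (idx, idx, 'k::comm_semiring_1) mor" where
  "incl m a b = (\<lambda>i r c. if c \<in> dsp (\<lambda>x y. if x = a \<and> y = b then m a b else 0) i \<and> r = c then 1 else 0)"

definition proj :: "(nat \<Rightarrow> nat \<Rightarrow> nat) \<Rightarrow> nat \<Rightarrow> nat \<Rightarrow> (idx, idx, 'k::comm_semiring_1) mor" where
  "proj m c d = (\<lambda>i r x. if r \<in> dsp (\<lambda>x y. if x = c \<and> y = d then m c d else 0) i \<and> r = x then 1 else 0)"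

text \<open>block  \<Phi>^{c:d}_{a:b} = \<pi>_{c,d} o \<Phi> o \<iota>_{a,b}  for  \<Phi> : DS m -> DS m'\<close>
definition blk :: "(nat \<Rightarrow> nat \<Rightarrow> nat) \<Rightarrow> (nat \<Rightarrow> nat \<Rightarrow> nat) \<Rightarrow> nat \<Rightarrow> nat \<Rightarrow> nat \<Rightarrow> nat
                    \<Rightarrow> (idx, idx, 'k::comm_semiring_1) mor \<Rightarrow> (idx, idx, 'k) mor" where
  "blk m m' a b c d \<Phi> = comp (DS m') (proj m' c d) (comp (DS m) \<Phi> (incl m a b))"

definition arrow_iso :: "('a, 'k::comm_semiring_1) rep \<Rightarrow> ('b, 'k) rep \<Rightarrow> ('b, 'a, 'k) mor
                         \<Rightarrow> ('c, 'k) rep \<Rightarrow> ('d, 'k) rep \<Rightarrow> ('d, 'c, 'k) mor \<Rightarrow> bool" where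
  "arrow_iso M N f M' N' f' \<longleftrightarrow> is_mor M N f \<and> is_mor M' N' f' \<and>
     (\<exists>FM FN. is_iso M M' FM \<and> is_iso N N' FN \<and> comp N FN f = comp M' f' FM)"

end

theory Submission
  imports Defs
begin

text \<open>Write \<open>F\<^sub>1\<^sub>3\<close> for the block \<open>F\<^sup>1\<^sup>:\<^sup>3\<^sub>1\<^sub>:\<^sub>3\<close>. For the quiver \<open>1 \<leftarrow> 2 \<rightarrow> 3\<close> there are no nonzero
  morphisms from \<open>\<bbbI>[1,3]\<close> to \<open>\<bbbI>[1,1]\<close> or \<open>\<bbbI>[3,3]\<close>, nor from \<open>\<bbbI>[1,2]\<close>, \<open>\<bbbI>[2,2]\<close>
  or \<open>\<bbbI>[2,3]\<close> to \<open>\<bbbI>[1,3]\<close>. Hence in the matrix product computing \<open>(G F)\<^sub>1\<^sub>3\<close> only the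
  summands \<open>\<bbbI>[1,3]\<close> of the middle object contribute, i.e. \<open>(G F)\<^sub>1\<^sub>3 = G\<^sub>1\<^sub>3 F\<^sub>1\<^sub>3\<close>, and
  \<open>F \<mapsto> F\<^sub>1\<^sub>3\<close> is a functor. It therefore maps \<open>\<Phi> = R \<Psi> C\<close> to \<open>\<Phi>\<^sub>1\<^sub>3 = R\<^sub>1\<^sub>3 \<Psi>\<^sub>1\<^sub>3 C\<^sub>1\<^sub>3\<close>,
  isomorphisms to isomorphisms, and isomorphic arrows to isomorphic arrows. Finally, for two
  choices of decompositions, \<open>\<eta>\<^sub>W \<phi> \<eta>\<^sub>V\<^sup>-\<^sup>1\<close> and \<open>\<eta>'\<^sub>W \<phi> \<eta>'\<^sub>V\<^sup>-\<^sup>1\<close> are isomorphic arrows via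
  \<open>\<eta>'\<^sub>V \<eta>\<^sub>V\<^sup>-\<^sup>1\<close> and \<open>\<eta>'\<^sub>W \<eta>\<^sub>W\<^sup>-\<^sup>1\<close>.\<close>

lemma sum_mult_delta_right:
  assumes "finite S"
  shows "(\<Sum>x\<in>S. f x * (if x \<in> S \<and> P \<and> x = c then 1 else 0)) =
     (if c \<in> S \<and> P then (f c :: 'k::comm_semiring_1) else 0)"
proof -
  have "(\<Sum>x\<in>S. f x * (if x \<in> S \<and> P \<and> x = c then 1 else 0)) =
      (\<Sum>x\<in>S. if x = c then (if P then f c else 0) else 0)"
    by (rule sum.cong) auto
  then show ?thesis using assms by (simp add: sum.delta')
qed

lemma sum_mult_delta_left:
  assumes "finite S"
  shows "(\<Sum>x\<in>S. (if r \<in> T \<and> x \<in> S \<and> r = x then 1 else 0) * f x) =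
     (if r \<in> T \<and> r \<in> S then (f r :: 'k::comm_semiring_1) else 0)"
proof -
  have "(\<Sum>x\<in>S. (if r \<in> T \<and> x \<in> S \<and> r = x then 1 else 0) * f x) =
      (\<Sum>x\<in>S. if r = x then (if r \<in> T then f r else 0) else 0)"
    by (rule sum.cong) auto
  then show ?thesis using assms by (simp add: sum.delta)
qed

lemma mmul_assoc:
  "finite S \<Longrightarrow> finite T \<Longrightarrow>
     mmul S A (mmul T B C) = mmul T (mmul S A B) (C :: _ \<Rightarrow> _ \<Rightarrow> 'k::comm_semiring_1)"
  unfolding mmul_def
  by (rule ext)+ (simp add: sum_distrib_left sum_distrib_right mult.assoc sum.swap[of _ S])

lemma mmul_paste_squares:
  assumes "finite SU" "finite SV" "finite SV2" "finite SW2"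
    and "mmul SV F1 aV = mmul SW2 aW F2" and "mmul SU G1 aU = mmul SV2 aV G2"
  shows "mmul SU (mmul SV F1 G1) aU = mmul SW2 aW (mmul SV2 F2 (G2 :: _ \<Rightarrow> _ \<Rightarrow> 'k::comm_semiring_1))"
proof -
  have "mmul SU (mmul SV F1 G1) aU = mmul SV F1 (mmul SV2 aV G2)"
    using mmul_assoc[OF assms(2,1), of F1 G1 aU] assms(6) by simp
  also have "\<dots> = mmul SV2 (mmul SW2 aW F2) G2"
    using mmul_assoc[OF assms(2,3), of F1 aV G2] assms(5) by simp
  also have "\<dots> = mmul SW2 aW (mmul SV2 F2 G2)"
    by (rule mmul_assoc[OF assms(4,3), symmetric])
  finally show ?thesis .
qed

lemma comp_assoc:
  "(\<And>i. finite (sp B i)) \<Longrightarrow> (\<And>i. finite (sp C i)) \<Longrightarrow>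
     comp B F (comp C G H) = comp C (comp B F G) (H :: (_, _, 'k::comm_semiring_1) mor)"
  unfolding comp_def by (rule ext) (simp add: mmul_assoc)

lemma is_mor_comp:
  assumes G: "is_mor U V G" and F: "is_mor V W (F :: (_, _, 'k::comm_semiring_1) mor)"
    and fU: "\<And>i. finite (sp U i)" and fV: "\<And>i. finite (sp V i)" and fW: "\<And>i. finite (sp W i)"
  shows "is_mor U W (comp V F G)"
proof -
  have support: "comp V F G i r c = 0" if "i \<notin> {1,2,3} \<or> r \<notin> sp W i \<or> c \<notin> sp U i" for i r c
    using that F G by (auto simp: comp_def mmul_def is_mor_def)
  show ?thesis
    using F G support unfolding is_mor_def comp_def
    by (auto intro: mmul_paste_squares fU fV fW)
qed

lemma comp_idm_left:
  assumes "is_mor V W F" and "\<And>i. finite (sp W i)"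
  shows "comp W (idm W) F = (F :: (_, _, 'k::comm_semiring_1) mor)"
proof (rule ext)+
  fix i r c
  have "comp W (idm W) F i r c = (\<Sum>x\<in>sp W i. (if r \<in> sp W i \<and> x \<in> sp W i \<and> r = x then 1 else 0) * F i x c)"
    unfolding comp_def mmul_def idm_def by (rule sum.cong) auto
  also have "\<dots> = (if r \<in> sp W i \<and> r \<in> sp W i then F i r c else 0)"
    by (rule sum_mult_delta_left[OF assms(2)])
  also have "\<dots> = F i r c" using assms(1) unfolding is_mor_def by auto
  finally show "comp W (idm W) F i r c = F i r c" .
qed

lemma inv_pair_sym: "inv_pair V W F G \<Longrightarrow> inv_pair W V G F"
  by (auto simp: inv_pair_def)

lemma comp_inv_pairs_eq_idm:
  assumes p1: "inv_pair V X1 e1 e1i" and p2: "inv_pair V X2 e2 (e2i :: (_, _, 'k::comm_semiring_1) mor)"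
    and fV: "\<And>i. finite (sp V i)" and f2: "\<And>i. finite (sp X2 i)"
  shows "comp X2 (comp V e1 e2i) (comp V e2 e1i) = idm X1"
proof -
  have "comp X2 (comp V e1 e2i) (comp V e2 e1i) = comp V e1 (comp V (comp X2 e2i e2) e1i)"
    by (simp add: comp_assoc fV f2)
  also have "comp X2 e2i e2 = idm V" using p2 by (simp add: inv_pair_def)
  also have "comp V (idm V) e1i = e1i"
    using p1 by (intro comp_idm_left[OF _ fV]) (auto simp: inv_pair_def)
  finally show ?thesis using p1 by (simp add: inv_pair_def)
qed

lemma inv_pair_change_of_decomposition:
  assumes p1: "inv_pair V X1 e1 e1i" and p2: "inv_pair V X2 e2 (e2i :: (_, _, 'k::comm_semiring_1) mor)"
    and fV: "\<And>i. finite (sp V i)" and f1: "\<And>i. finite (sp X1 i)" and f2: "\<And>i. finite (sp X2 i)"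
  shows "inv_pair X1 X2 (comp V e2 e1i) (comp V e1 e2i)"
  using p1 p2 comp_inv_pairs_eq_idm[OF p1 p2 fV f2] comp_inv_pairs_eq_idm[OF p2 p1 fV f1]
    is_mor_comp[OF _ _ f1 fV f2] is_mor_comp[OF _ _ f2 fV f1]
  unfolding inv_pair_def by blast

lemma arrow_iso_factorisation:
  assumes \<Psi>: "is_mor M' N' \<Psi>" and C: "is_iso M M' C"
    and R: "inv_pair N' N R (R' :: (_, _, 'k::comm_semiring_1) mor)"
    and fM: "\<And>i. finite (sp M i)" and fM': "\<And>i. finite (sp M' i)"
    and fN: "\<And>i. finite (sp N i)" and fN': "\<And>i. finite (sp N' i)"
  shows "arrow_iso M N (comp N' R (comp M' \<Psi> C)) M' N' \<Psi>"
  unfolding arrow_iso_def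
proof (intro conjI exI)
  have \<Psi>C: "is_mor M N' (comp M' \<Psi> C)"
    using C \<Psi> by (auto simp: is_iso_def inv_pair_def intro: is_mor_comp fM fM' fN')
  then show "is_mor M N (comp N' R (comp M' \<Psi> C))"
    using R by (auto simp: inv_pair_def intro: is_mor_comp fM fN fN')
  show "is_mor M' N' \<Psi>" by (fact \<Psi>)
  show "is_iso M M' C" by (fact C)
  show "is_iso N N' R'" using inv_pair_sym[OF R] by (auto simp: is_iso_def)
  have "comp N R' (comp N' R (comp M' \<Psi> C)) = comp N' (comp N R' R) (comp M' \<Psi> C)"
    by (simp add: comp_assoc fN fN')
  also have "\<dots> = comp M' \<Psi> C"
    using R by (simp add: inv_pair_def comp_idm_left[OF \<Psi>C fN'])
  finally show "comp N R' (comp N' R (comp M' \<Psi> C)) = comp M' \<Psi> C" .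
qed

lemma arrow_iso_conj_decompositions:
  assumes \<phi>: "is_mor V W \<phi>"
    and pV: "inv_pair V X \<eta>V \<eta>Vi" and pV2: "inv_pair V X2 \<eta>V2 \<eta>V2i"
    and pW: "inv_pair W Y \<eta>W \<eta>Wi" and pW2: "inv_pair W Y2 \<eta>W2 (\<eta>W2i :: (_, _, 'k::comm_semiring_1) mor)"
    and fV: "\<And>i. finite (sp V i)" and fW: "\<And>i. finite (sp W i)"
    and fX: "\<And>i. finite (sp X i)" and fX2: "\<And>i. finite (sp X2 i)"
    and fY: "\<And>i. finite (sp Y i)" and fY2: "\<And>i. finite (sp Y2 i)"
  shows "arrow_iso X Y (comp W \<eta>W (comp V \<phi> \<eta>Vi)) X2 Y2 (comp W \<eta>W2 (comp V \<phi> \<eta>V2i))"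
  unfolding arrow_iso_def
proof (intro conjI exI)
  have \<phi>\<eta>: "is_mor X W (comp V \<phi> \<eta>Vi)" "is_mor X2 W (comp V \<phi> \<eta>V2i)"
    using pV pV2 by (auto simp: inv_pair_def intro: is_mor_comp[OF _ \<phi>] fV fW fX fX2)
  then show "is_mor X Y (comp W \<eta>W (comp V \<phi> \<eta>Vi))" "is_mor X2 Y2 (comp W \<eta>W2 (comp V \<phi> \<eta>V2i))"
    using pW pW2 by (auto simp: inv_pair_def intro: is_mor_comp fW fX fX2 fY fY2)
  show "is_iso X X2 (comp V \<eta>V2 \<eta>Vi)" "is_iso Y Y2 (comp W \<eta>W2 \<eta>Wi)"
    unfolding is_iso_def
    by (blast intro: inv_pair_change_of_decomposition pV pV2 pW pW2 fV fW fX fX2 fY fY2)+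
  have "comp Y (comp W \<eta>W2 \<eta>Wi) (comp W \<eta>W (comp V \<phi> \<eta>Vi))
        = comp W \<eta>W2 (comp W (comp Y \<eta>Wi \<eta>W) (comp V \<phi> \<eta>Vi))"
    by (simp add: comp_assoc fW fY)
  also have "\<dots> = comp W \<eta>W2 (comp V \<phi> \<eta>Vi)"
    using pW by (simp add: inv_pair_def comp_idm_left[OF \<phi>\<eta>(1) fW])
  also have "\<dots> = comp W \<eta>W2 (comp V \<phi> (comp V (comp X2 \<eta>V2i \<eta>V2) \<eta>Vi))"
    using pV pV2 comp_idm_left[of X V \<eta>Vi, OF _ fV] by (simp add: inv_pair_def)
  also have "\<dots> = comp X2 (comp W \<eta>W2 (comp V \<phi> \<eta>V2i)) (comp V \<eta>V2 \<eta>Vi)"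
    by (simp add: comp_assoc fV fW fX2)
  finally show "comp Y (comp W \<eta>W2 \<eta>Wi) (comp W \<eta>W (comp V \<phi> \<eta>Vi))
      = comp X2 (comp W \<eta>W2 (comp V \<phi> \<eta>V2i)) (comp V \<eta>V2 \<eta>Vi)" .
qed

subsection \<open>Direct sums of interval representations\<close>

lemma mem_dsp [simp]:
  "(b, d, j) \<in> dsp m i \<longleftrightarrow> i \<in> {1,2,3} \<and> 1 \<le> b \<and> b \<le> i \<and> i \<le> d \<and> d \<le> 3 \<and> j < m b d"
  by (auto simp: dsp_def)

lemma finite_dsp [simp]: "finite (dsp m i)"
proof (rule finite_subset)
  show "dsp m i \<subseteq> (SIGMA b:{..3}. SIGMA d:{..3}. {..<m b d})" by (auto simp: dsp_def)
qed auto

lemma sp_DS [simp]: "sp (DS m) = dsp m"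
  and al_DS [simp]: "al (DS m) = (\<lambda>r c. if r \<in> dsp m 1 \<and> c \<in> dsp m 2 \<and> r = c then 1 else 0)"
  and be_DS [simp]: "be (DS m) = (\<lambda>r c. if r \<in> dsp m 3 \<and> c \<in> dsp m 2 \<and> r = c then 1 else 0)"
  by (simp_all add: DS_def)

lemma is_mor_DS_iff:
  "is_mor (DS m) (DS m') (F :: (idx, idx, 'k::comm_semiring_1) mor) \<longleftrightarrow>
    (\<forall>i r c. (i \<notin> {1,2,3} \<or> r \<notin> dsp m' i \<or> c \<notin> dsp m i) \<longrightarrow> F i r c = 0)
    \<and> (\<forall>r c. (if c \<in> dsp m 1 \<and> c \<in> dsp m 2 then F 1 r c else 0) =
               (if r \<in> dsp m' 1 \<and> r \<in> dsp m' 2 then F 2 r c else 0))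
    \<and> (\<forall>r c. (if c \<in> dsp m 3 \<and> c \<in> dsp m 2 then F 3 r c else 0) =
               (if r \<in> dsp m' 3 \<and> r \<in> dsp m' 2 then F 2 r c else 0))"
proof -
  have e1: "mmul (dsp m 1) (F 1) (al (DS m)) = (\<lambda>r c. if c \<in> dsp m 1 \<and> c \<in> dsp m 2 then F 1 r c else 0)"
   and e2: "mmul (dsp m 3) (F 3) (be (DS m)) = (\<lambda>r c. if c \<in> dsp m 3 \<and> c \<in> dsp m 2 then F 3 r c else 0)"
    by (rule ext)+ (simp only: mmul_def al_DS be_DS sum_mult_delta_right finite_dsp)+
  have e3: "mmul (dsp m' 2) (al (DS m')) (F 2) = (\<lambda>r c. if r \<in> dsp m' 1 \<and> r \<in> dsp m' 2 then F 2 r c else 0)"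
   and e4: "mmul (dsp m' 2) (be (DS m')) (F 2) = (\<lambda>r c. if r \<in> dsp m' 3 \<and> r \<in> dsp m' 2 then F 2 r c else 0)"
    by (rule ext)+ (simp only: mmul_def al_DS be_DS sum_mult_delta_left finite_dsp)+
  show ?thesis unfolding is_mor_def sp_DS e1 e2 e3 e4 by (auto simp: fun_eq_iff)
qed

lemma is_mor_DS_zero:
  "is_mor (DS m) (DS m') F \<Longrightarrow> i \<notin> {1,2,3} \<or> r \<notin> dsp m' i \<or> c \<notin> dsp m i \<Longrightarrow> F i r c = 0"
  and is_mor_DS_al:
  "is_mor (DS m) (DS m') F \<Longrightarrow> (if c \<in> dsp m 1 \<and> c \<in> dsp m 2 then F 1 r c else 0) =
     (if r \<in> dsp m' 1 \<and> r \<in> dsp m' 2 then F 2 r c else 0)"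
  and is_mor_DS_be:
  "is_mor (DS m) (DS m') F \<Longrightarrow> (if c \<in> dsp m 3 \<and> c \<in> dsp m 2 then F 3 r c else 0) =
     (if r \<in> dsp m' 3 \<and> r \<in> dsp m' 2 then F 2 r c else 0)"
  unfolding is_mor_DS_iff by blast+

lemma mor_DS_I13_to_I11_I33_eq_0:
  assumes F: "is_mor (DS m) (DS m') F" and j: "j < m 1 3"
    and bd: "(b, d) = (1, 1) \<or> (b, d) = (3, 3)"
  shows "F i (b, d, k) (1, 3, j) = 0"
proof (cases "(b, d, k) \<in> dsp m' i")
  case True
  with bd consider "b = 1" "d = 1" "i = 1" | "b = 3" "d = 3" "i = 3" by auto
  then show ?thesis
    using is_mor_DS_al[OF F, of "(1,3,j)" "(b,d,k)"] is_mor_DS_be[OF F, of "(1,3,j)" "(b,d,k)"] j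
    by cases simp_all
qed (use is_mor_DS_zero[OF F] in blast)

lemma mor_DS_I12_I22_I23_to_I13_eq_0:
  assumes F: "is_mor (DS m) (DS m') F" and j: "j < m' 1 3"
    and bd: "(b, d) = (1, 2) \<or> (b, d) = (2, 2) \<or> (b, d) = (2, 3)"
  shows "F i (1, 3, j) (b, d, k) = 0"
proof (cases "(b, d, k) \<in> dsp m i")
  case True
  \<comment> \<open>\<open>\<bbbI>[b,d]\<close> misses vertex 1 or 3, so commutativity there kills the component at 2 first\<close>
  have "F 2 (1, 3, j) (b, d, k) = 0"
    using bd True j is_mor_DS_al[OF F, of "(b,d,k)" "(1,3,j)"] is_mor_DS_be[OF F, of "(b,d,k)" "(1,3,j)"]
    by (auto split: if_splits)
  then show ?thesis
    using bd True j is_mor_DS_al[OF F, of "(b,d,k)" "(1,3,j)"] is_mor_DS_be[OF F, of "(b,d,k)" "(1,3,j)"]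
    by (auto split: if_splits)
qed (use is_mor_DS_zero[OF F] in blast)

subsection \<open>The block at the summand \<open>\<bbbI>[1,3]\<close>\<close>

abbreviation sp13 :: "nat \<Rightarrow> nat \<Rightarrow> idx set" where
  "sp13 k \<equiv> dsp (\<lambda>x y. if x = 1 \<and> y = 3 then k else 0)"

lemma mem_sp13: "x \<in> sp13 k i \<longleftrightarrow> i \<in> {1,2,3} \<and> (\<exists>j<k. x = (1, 3, j))"
  by (cases x) (auto split: if_splits)

lemma sp13_subset_dsp: "sp13 (m 1 3) i \<subseteq> dsp m i"
  by (auto simp: dsp_def split: if_splits)

lemma sp_Iint13 [simp]: "sp (Iint k 1 3) = sp13 k"
  by (simp add: Iint_def)

lemma blk13_eq:
  "blk m m' 1 3 1 3 F = (\<lambda>i r c. if r \<in> sp13 (m' 1 3) i \<and> c \<in> sp13 (m 1 3) i then F i r c else 0)"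
proof -
  have restrict_cols: "comp (DS m) F (incl m 1 3) = (\<lambda>i r c. if c \<in> sp13 (m 1 3) i then F i r c else 0)"
  proof (rule ext)+
    fix i r c
    have "comp (DS m) F (incl m 1 3) i r c
        = (\<Sum>x\<in>dsp m i. if x = c then (if c \<in> sp13 (m 1 3) i then F i r c else 0) else 0)"
      unfolding comp_def mmul_def incl_def sp_DS by (rule sum.cong) auto
    then show "comp (DS m) F (incl m 1 3) i r c = (if c \<in> sp13 (m 1 3) i then F i r c else 0)"
      using sp13_subset_dsp[of m i] by (auto simp: sum.delta')
  qed
  show ?thesis
  proof (rule ext)+
    fix i r c
    have "blk m m' 1 3 1 3 F i r c = (\<Sum>x\<in>dsp m' i. if x = r then
          (if r \<in> sp13 (m' 1 3) i \<and> c \<in> sp13 (m 1 3) i then F i r c else 0) else 0)"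
      unfolding blk_def restrict_cols unfolding comp_def mmul_def proj_def sp_DS by (rule sum.cong) auto
    then show "blk m m' 1 3 1 3 F i r c =
        (if r \<in> sp13 (m' 1 3) i \<and> c \<in> sp13 (m 1 3) i then F i r c else 0)"
      using sp13_subset_dsp[of m' i] by (auto simp: sum.delta)
  qed
qed

lemma blk13_comp:
  assumes F: "is_mor (DS m1) (DS m2) F" and G: "is_mor (DS m2) (DS m3) (G :: (idx, idx, 'k::comm_semiring_1) mor)"
  shows "blk m1 m3 1 3 1 3 (comp (DS m2) G F) =
           comp (Iint (m2 1 3) 1 3) (blk m2 m3 1 3 1 3 G) (blk m1 m2 1 3 1 3 F)"
proof (rule ext)+
  fix i r c
  show "blk m1 m3 1 3 1 3 (comp (DS m2) G F) i r c =
      comp (Iint (m2 1 3) 1 3) (blk m2 m3 1 3 1 3 G) (blk m1 m2 1 3 1 3 F) i r c"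
  proof (cases "r \<in> sp13 (m3 1 3) i \<and> c \<in> sp13 (m1 1 3) i")
    case False
    then show ?thesis unfolding blk13_eq comp_def mmul_def sp_Iint13 by auto
  next
    case True
    then obtain j j' where r: "r = (1, 3, j')" and c: "c = (1, 3, j)"
      and j: "j < m1 1 3" and j': "j' < m3 1 3" and i: "i \<in> {1,2,3}"
      unfolding mem_sp13 by blast
    have "comp (Iint (m2 1 3) 1 3) (blk m2 m3 1 3 1 3 G) (blk m1 m2 1 3 1 3 F) i r c
        = (\<Sum>x\<in>sp13 (m2 1 3) i. G i r x * F i x c)"
      unfolding blk13_eq comp_def mmul_def sp_Iint13 using True by (intro sum.cong) auto
    also have "\<dots> = (\<Sum>x\<in>dsp m2 i. G i r x * F i x c)"
    proof (rule sum.mono_neutral_left)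
      show "\<forall>x\<in>dsp m2 i - sp13 (m2 1 3) i. G i r x * F i x c = 0"
      proof
        fix x assume x: "x \<in> dsp m2 i - sp13 (m2 1 3) i"
        obtain b d k where x_eq: "x = (b, d, k)" by (cases x)
        with x i have "1 \<le> b" "b \<le> d" "d \<le> 3" "(b, d) \<noteq> (1, 3)" by (auto simp: mem_sp13)
        then have "(b, d) \<in> {(1,1), (3,3), (1,2), (2,2), (2,3)}" by auto
        then show "G i r x * F i x c = 0"
          using mor_DS_I13_to_I11_I33_eq_0[OF F j, of b d i k]
            mor_DS_I12_I22_I23_to_I13_eq_0[OF G j', of b d i k]
          by (auto simp: x_eq r c)
      qed
    qed (use sp13_subset_dsp[of m2 i] in auto)
    also have "\<dots> = blk m1 m3 1 3 1 3 (comp (DS m2) G F) i r c"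
      unfolding blk13_eq comp_def mmul_def sp_DS using True by simp
    finally show ?thesis by simp
  qed
qed

lemma blk13_mor:
  assumes F: "is_mor (DS m) (DS m') (F :: (idx, idx, 'k::comm_semiring_1) mor)"
  shows "is_mor (Iint (m 1 3) 1 3) (Iint (m' 1 3) 1 3) (blk m m' 1 3 1 3 F)"
proof -
  have diag: "F 1 (1,3,j') (1,3,j) = F 2 (1,3,j') (1,3,j)" "F 3 (1,3,j') (1,3,j) = F 2 (1,3,j') (1,3,j)"
    if "j < m 1 3" "j' < m' 1 3" for j j'
    using that is_mor_DS_al[OF F, of "(1,3,j)" "(1,3,j')"] is_mor_DS_be[OF F, of "(1,3,j)" "(1,3,j')"]
    by auto
  show ?thesis
    unfolding Iint_def is_mor_DS_iff
  proof (intro conjI allI impI)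
    fix i r c assume "i \<notin> {1, 2, 3} \<or> r \<notin> sp13 (m' 1 3) i \<or> c \<notin> sp13 (m 1 3) i"
    then show "blk m m' 1 3 1 3 F i r c = 0" unfolding blk13_eq mem_sp13 by auto
  next
    fix r c
    show "(if c \<in> sp13 (m 1 3) 1 \<and> c \<in> sp13 (m 1 3) 2 then blk m m' 1 3 1 3 F 1 r c else 0) =
        (if r \<in> sp13 (m' 1 3) 1 \<and> r \<in> sp13 (m' 1 3) 2 then blk m m' 1 3 1 3 F 2 r c else 0)"
      unfolding blk13_eq mem_sp13 using diag by auto
    show "(if c \<in> sp13 (m 1 3) 3 \<and> c \<in> sp13 (m 1 3) 2 then blk m m' 1 3 1 3 F 3 r c else 0) =
        (if r \<in> sp13 (m' 1 3) 3 \<and> r \<in> sp13 (m' 1 3) 2 then blk m m' 1 3 1 3 F 2 r c else 0)"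
      unfolding blk13_eq mem_sp13 using diag by auto
  qed
qed

lemma blk13_idm: "blk m m 1 3 1 3 (idm (DS m)) = idm (Iint (m 1 3) 1 3)"
  unfolding blk13_eq idm_def sp_Iint13 sp_DS mem_sp13 by (rule ext)+ auto

lemma blk13_inv_pair:
  assumes "inv_pair (DS m) (DS m') R (R' :: (idx, idx, 'k::comm_semiring_1) mor)"
  shows "inv_pair (Iint (m 1 3) 1 3) (Iint (m' 1 3) 1 3) (blk m m' 1 3 1 3 R) (blk m' m 1 3 1 3 R')"
proof -
  have R: "is_mor (DS m) (DS m') R" and R': "is_mor (DS m') (DS m) R'"
    and inverse: "comp (DS m') R' R = idm (DS m)" "comp (DS m) R R' = idm (DS m')"
    using assms by (auto simp: inv_pair_def)
  show ?thesis
    unfolding inv_pair_def blk13_comp[OF R R', symmetric] blk13_comp[OF R' R, symmetric] inverse blk13_idm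
    using blk13_mor[OF R] blk13_mor[OF R'] by blast
qed

lemma blk13_iso:
  "is_iso (DS m) (DS m') (R :: (idx, idx, 'k::comm_semiring_1) mor) \<Longrightarrow>
     is_iso (Iint (m 1 3) 1 3) (Iint (m' 1 3) 1 3) (blk m m' 1 3 1 3 R)"
  unfolding is_iso_def using blk13_inv_pair by blast

lemma arrow_iso_blk13:
  assumes "arrow_iso (DS m1) (DS n1) \<Phi> (DS m2) (DS n2) (\<Psi> :: (idx, idx, 'k::comm_semiring_1) mor)"
  shows "arrow_iso (Iint (m1 1 3) 1 3) (Iint (n1 1 3) 1 3) (blk m1 n1 1 3 1 3 \<Phi>)
                   (Iint (m2 1 3) 1 3) (Iint (n2 1 3) 1 3) (blk m2 n2 1 3 1 3 \<Psi>)"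
proof -
  obtain FM FN where \<Phi>: "is_mor (DS m1) (DS n1) \<Phi>" and \<Psi>: "is_mor (DS m2) (DS n2) \<Psi>"
    and FM: "is_iso (DS m1) (DS m2) FM" and FN: "is_iso (DS n1) (DS n2) FN"
    and square: "comp (DS n1) FN \<Phi> = comp (DS m2) \<Psi> FM"
    using assms unfolding arrow_iso_def by blast
  have FM_mor: "is_mor (DS m1) (DS m2) FM" and FN_mor: "is_mor (DS n1) (DS n2) FN"
    using FM FN by (auto simp: is_iso_def inv_pair_def)
  show ?thesis
    unfolding arrow_iso_def
  proof (intro conjI exI)
    show "comp (Iint (n1 1 3) 1 3) (blk n1 n2 1 3 1 3 FN) (blk m1 n1 1 3 1 3 \<Phi>) =
        comp (Iint (m2 1 3) 1 3) (blk m2 n2 1 3 1 3 \<Psi>) (blk m1 m2 1 3 1 3 FM)"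
      unfolding blk13_comp[OF \<Phi> FN_mor, symmetric] blk13_comp[OF FM_mor \<Psi>, symmetric] square ..
  qed (fact blk13_mor[OF \<Phi>] blk13_mor[OF \<Psi>] blk13_iso[OF FM] blk13_iso[OF FN])+
qed

theorem mainTheorem4:
  fixes m m' :: "nat \<Rightarrow> nat \<Rightarrow> nat"
    and \<Phi> \<Psi> C R :: "(idx, idx, 'k::field) mor"
  assumes "is_mor (DS m) (DS m') \<Phi>" and "is_mor (DS m) (DS m') \<Psi>"
    and "is_iso (DS m) (DS m) C" and "is_iso (DS m') (DS m') R"
    and "\<Phi> = comp (DS m') R (comp (DS m) \<Psi> C)"
  shows "blk m m' 1 3 1 3 \<Phi> =
           comp (Iint (m' 1 3) 1 3) (blk m' m' 1 3 1 3 R)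
             (comp (Iint (m 1 3) 1 3) (blk m m' 1 3 1 3 \<Psi>) (blk m m 1 3 1 3 C))
       \<and> is_iso (Iint (m' 1 3) 1 3) (Iint (m' 1 3) 1 3) (blk m' m' 1 3 1 3 R)
       \<and> is_iso (Iint (m 1 3) 1 3) (Iint (m 1 3) 1 3) (blk m m 1 3 1 3 C)
       \<and> arrow_iso (Iint (m 1 3) 1 3) (Iint (m' 1 3) 1 3) (blk m m' 1 3 1 3 \<Phi>)
                   (Iint (m 1 3) 1 3) (Iint (m' 1 3) 1 3) (blk m m' 1 3 1 3 \<Psi>)
       \<and> (\<forall>(V :: ('a, 'k) rep) (W :: ('b, 'k) rep) \<phi>
            mV \<eta>V \<eta>Vi mV2 \<eta>V2 \<eta>V2i mW \<eta>W \<eta>Wi mW2 \<eta>W2 \<eta>W2i.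
            wf_rep V \<and> wf_rep W \<and> is_mor V W \<phi>
            \<and> inv_pair V (DS mV) \<eta>V \<eta>Vi \<and> inv_pair V (DS mV2) \<eta>V2 \<eta>V2i
            \<and> inv_pair W (DS mW) \<eta>W \<eta>Wi \<and> inv_pair W (DS mW2) \<eta>W2 \<eta>W2i
            \<longrightarrow> arrow_iso (Iint (mV 1 3) 1 3) (Iint (mW 1 3) 1 3)
                   (blk mV mW 1 3 1 3 (comp W \<eta>W (comp V \<phi> \<eta>Vi)))
                 (Iint (mV2 1 3) 1 3) (Iint (mW2 1 3) 1 3)
                   (blk mV2 mW2 1 3 1 3 (comp W \<eta>W2 (comp V \<phi> \<eta>V2i))))"
proof -
  have fin: "\<And>m i. finite (sp (DS m) i)" by simp
  obtain R' where R: "inv_pair (DS m') (DS m') R R'" using assms(4) by (auto simp: is_iso_def)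
  have C_mor: "is_mor (DS m) (DS m) C" and R_mor: "is_mor (DS m') (DS m') R"
    using assms(3) R by (auto simp: is_iso_def inv_pair_def)
  have \<Psi>C_mor: "is_mor (DS m) (DS m') (comp (DS m) \<Psi> C)"
    by (rule is_mor_comp[OF C_mor assms(2) fin fin fin])
  have block_eq: "blk m m' 1 3 1 3 \<Phi> =
      comp (Iint (m' 1 3) 1 3) (blk m' m' 1 3 1 3 R)
        (comp (Iint (m 1 3) 1 3) (blk m m' 1 3 1 3 \<Psi>) (blk m m 1 3 1 3 C))"
    unfolding assms(5) blk13_comp[OF \<Psi>C_mor R_mor] blk13_comp[OF C_mor assms(2)] ..
  have arrow_DS: "arrow_iso (DS m) (DS m') \<Phi> (DS m) (DS m') \<Psi>"
    unfolding assms(5) using arrow_iso_factorisation[OF assms(2,3) R fin fin fin fin] .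
  have arrow_decompositions: "arrow_iso (Iint (mV 1 3) 1 3) (Iint (mW 1 3) 1 3)
        (blk mV mW 1 3 1 3 (comp W \<eta>W (comp V \<phi> \<eta>Vi)))
      (Iint (mV2 1 3) 1 3) (Iint (mW2 1 3) 1 3)
        (blk mV2 mW2 1 3 1 3 (comp W \<eta>W2 (comp V \<phi> \<eta>V2i)))"
    if "wf_rep V" "wf_rep W" "is_mor V W \<phi>"
      "inv_pair V (DS mV) \<eta>V \<eta>Vi" "inv_pair V (DS mV2) \<eta>V2 \<eta>V2i"
      "inv_pair W (DS mW) \<eta>W \<eta>Wi" "inv_pair W (DS mW2) \<eta>W2 \<eta>W2i"
    for V :: "('a, 'k) rep" and W :: "('b, 'k) rep" and \<phi>
      mV \<eta>V \<eta>Vi mV2 \<eta>V2 \<eta>V2i mW \<eta>W \<eta>Wi mW2 \<eta>W2 \<eta>W2i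
    using that(1,2) by (intro arrow_iso_blk13 arrow_iso_conj_decompositions[OF that(3-7)])
      (simp_all add: wf_rep_def)
  show ?thesis
    using block_eq blk13_iso[OF assms(4)] blk13_iso[OF assms(3)] arrow_iso_blk13[OF arrow_DS]
    by (intro conjI allI impI) (blast intro: arrow_decompositions)+
qed

end
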